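(* Consider the fast-slow system $\dot u = w$, $\dot v = u$, $\varepsilon \dot w = z$, $\varepsilon \dot z = \tfrac12(w^3-w)-v$ at $\varepsilon=0$, with Hamiltonian $H(u,v,w,z)=\tfrac18(4u^2-8vw-2w^2+w^4-4z^2)$. For $\mu\in\mathbb R$ there exists a singular periodic orbit $\gamma_0^\mu\subset\{H=\mu\}$ consisting of precisely two slow segments (trajectories of the reduced problem of positive length) and two fast segments (heteroclinic orbits of the layer problem), with slow segments lying entirely in $\mathcal C_{0,l}$ and $\mathcal C_{0,r}$, if and only if \[ \mu\in I_\mu:=\left(-\tfrac18,\ \tfrac1{24}\right). \]
   Context: Critical manifold: $\mathcal C_0=\{z=0,\ v=\tfrac12(w^3-w)\}$; $\mathcal C_{0,l}=\mathcal C_0\cap\{w<-1/\sqrt3\}$, $\mathcal C_{0,r}=\mathcal C_0\cap\{w>1/\sqrt3\}$. Reduced problem: $\dot u=w$, $\dot v=u$ on $\mathcal C_0$. Layer problem: $w'=z$, $z'=\tfrac12(w^3-w)-\bar v$ with $(u,v)=(\bar u,\bar v)$ fixed. A singular periodic orbit is a closed curve obtained by concatenating, alternately, trajectory segments of the reduced problem on $\mathcal C_0\cap\{H=\mu\}$ and heteroclinic orbits of the layer problem whose endpoints (equilibria of the layer problem) coincide with the endpoints of the adjacent slow segments, all lying in the level set $\{H=\mu\}$. *)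

theory Defs
  imports Complex_Main
begin

type_synonym pt = "real \<times> real \<times> real \<times> real"

definition H :: "pt \<Rightarrow> real" where
  "H p = (case p of (u, v, w, z) \<Rightarrow> (4*u^2 - 8*v*w - 2*w^2 + w^4 - 4*z^2) / 8)"

definition C0 :: "pt set" where
  "C0 = {(u, v, w, z). z = 0 \<and> v = (w^3 - w) / 2}"

definition C0l :: "pt set" where
  "C0l = C0 \<inter> {(u, v, w, z). w < - 1 / sqrt 3}"

definition C0r :: "pt set" where
  "C0r = C0 \<inter> {(u, v, w, z). w > 1 / sqrt 3}"

definition reduced_traj ::
  "(real \<Rightarrow> real) \<Rightarrow> (real \<Rightarrow> real) \<Rightarrow> (real \<Rightarrow> real) \<Rightarrow> (real \<Rightarrow> real) \<Rightarrow> real \<Rightarrow> bool" where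
  "reduced_traj u v w z T \<longleftrightarrow> T > 0 \<and>
     (\<forall>t\<in>{0..T}. (u t, v t, w t, z t) \<in> C0 \<and>
        (u has_real_derivative w t) (at t within {0..T}) \<and>
        (v has_real_derivative u t) (at t within {0..T}))"

definition layer_heteroclinic ::
  "real \<Rightarrow> (real \<Rightarrow> real) \<Rightarrow> (real \<Rightarrow> real) \<Rightarrow> real \<Rightarrow> real \<Rightarrow> bool" where
  "layer_heteroclinic vb w z wm wp \<longleftrightarrow>
     (\<forall>t. (w has_real_derivative z t) (at t) \<and>
          (z has_real_derivative ((w t ^ 3 - w t) / 2 - vb)) (at t)) \<and>
     (wm ^ 3 - wm) / 2 = vb \<and> (wp ^ 3 - wp) / 2 = vb \<and> wm \<noteq> wp \<and>
     (w \<longlongrightarrow> wm) at_bot \<and> (z \<longlongrightarrow> 0) at_bot \<and>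
     (w \<longlongrightarrow> wp) at_top \<and> (z \<longlongrightarrow> 0) at_top"

text \<open>gamma is a singular periodic orbit made of exactly two slow segments
  (one in C0l, one in C0r) and two fast segments, concatenated alternately:
  slow1 (in C0l) -> fast1 -> slow2 (in C0r) -> fast2 -> back to slow1.\<close>
definition sing_orbit_2slow_2fast :: "pt set \<Rightarrow> bool" where
  "sing_orbit_2slow_2fast \<gamma> \<longleftrightarrow>
   (\<exists>u1 v1 w1 z1 T1 u2 v2 w2 z2 T2 ub1 vb1 W1 Z1 a1 b1 ub2 vb2 W2 Z2 a2 b2.
      reduced_traj u1 v1 w1 z1 T1 \<and> (\<forall>t\<in>{0..T1}. (u1 t, v1 t, w1 t, z1 t) \<in> C0l) \<and>
      reduced_traj u2 v2 w2 z2 T2 \<and> (\<forall>t\<in>{0..T2}. (u2 t, v2 t, w2 t, z2 t) \<in> C0r) \<and>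
      layer_heteroclinic vb1 W1 Z1 a1 b1 \<and>
      layer_heteroclinic vb2 W2 Z2 a2 b2 \<and>
      (u1 T1, v1 T1, w1 T1, z1 T1) = (ub1, vb1, a1, 0) \<and>
      (ub1, vb1, b1, 0) = (u2 0, v2 0, w2 0, z2 0) \<and>
      (u2 T2, v2 T2, w2 T2, z2 T2) = (ub2, vb2, a2, 0) \<and>
      (ub2, vb2, b2, 0) = (u1 0, v1 0, w1 0, z1 0) \<and>
      \<gamma> = (\<lambda>t. (u1 t, v1 t, w1 t, z1 t)) ` {0..T1}
          \<union> (\<lambda>t. (ub1, vb1, W1 t, Z1 t)) ` UNIV
          \<union> (\<lambda>t. (u2 t, v2 t, w2 t, z2 t)) ` {0..T2}
          \<union> (\<lambda>t. (ub2, vb2, W2 t, Z2 t)) ` UNIV)"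

end

theory Submission
  imports Defs "HOL-Analysis.Analysis" "HOL-Real_Asymp.Real_Asymp"
begin

(* H is a first integral of the reduced and of the layer problem.  A fast jump joins two
   equilibria of one fibre, i.e. two roots of w^3 - w = 2 v, and equality of H at them forces
   them to be -1 and 1 (and v = 0).  So the slow segment in C0l runs from w = -1 to w = -1.
   Along it u' = w < 0 while 4 u^2 = 8 \<mu> + 3 w^4 - 2 w^2, so u runs from sqrt (1 + 8 \<mu>) / 2 to its
   negative: this needs \<mu> > -1/8, and at the zero of u we get 8 \<mu> = 2 w^2 - 3 w^4 < 1/3.
   Conversely, for \<mu> in the interval the slow segment is obtained by solving the scalar equation
   u' = w(u) along the graph w(u) of C0l \<inter> {H = \<mu>}, the fast segments are the tanh fronts of the
   layer problem at v = 0, and the point reflection p \<mapsto> -p, which preserves H and exchanges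
   C0l and C0r, supplies the second half of the orbit. *)

section \<open>Energy and symmetry\<close>

lemma H_uminus: "H (- u, - v, - w, - z) = H (u, v, w, z)"
  unfolding H_def by simp

lemma C0r_iff_uminus_C0l: "(- u, - v, - w, - z) \<in> C0r \<longleftrightarrow> (u, v, w, z) \<in> C0l"
  unfolding C0r_def C0l_def C0_def by (auto simp: power3_eq_cube algebra_simps)

lemma H_on_C0:
  assumes "(u, v, w, z) \<in> C0"
  shows "8 * H (u, v, w, z) = 4*u^2 - 3*w^4 + 2*w^2"
proof -
  have v: "v = (w^3 - w) / 2" and z: "z = 0"
    using assms unfolding C0_def by auto
  show ?thesis
    unfolding H_def v z by (simp add: field_simps power2_eq_square power3_eq_cube power4_eq_xxxx)
qed

lemma reduced_traj_uminus:
  assumes "reduced_traj u v w z T"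
  shows "reduced_traj (\<lambda>t. - u t) (\<lambda>t. - v t) (\<lambda>t. - w t) (\<lambda>t. - z t) T"
  using assms unfolding reduced_traj_def C0_def
  by (auto intro!: derivative_eq_intros simp: power3_eq_cube algebra_simps)

section \<open>Fast jumps\<close>

lemma layer_heteroclinic_equal_energy:
  assumes het: "layer_heteroclinic vb W Z a b"
    and energy: "H (ub, vb, a, 0) = H (ub, vb, b, 0)"
  shows "b = - a" and "a^2 = 1"
proof -
  have eq: "a^3 - a = 2 * vb" "b^3 - b = 2 * vb" and ne: "a \<noteq> b"
    using het unfolding layer_heteroclinic_def by auto
  have pot: "a^4 - 2*a^2 - 8 * vb*a = b^4 - 2*b^2 - 8 * vb*b"
    using energy unfolding H_def by simp
  have "(a - b) * (a^2 + a*b + b^2 - 1) = (a^3 - a) - (b^3 - b)"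
    by algebra
  with eq ne have sum: "a^2 + a*b + b^2 = 1"
    by simp
  have "(a - b) * ((a+b)*(a^2+b^2) - 2*(a+b) - 8 * vb) = (a^4 - 2*a^2 - 8 * vb*a) - (b^4 - 2*b^2 - 8 * vb*b)"
    by algebra
  with pot ne have "(a+b)*(a^2+b^2) - 2*(a+b) - 8 * vb = 0"
    by simp
  with sum eq have "(a + b) * (a - b)^2 = 0"
    by algebra
  with ne show "b = - a"
    by (simp add: add_eq_0_iff)
  with sum show "a^2 = 1"
    by (simp add: power2_eq_square)
qed

lemma layer_heteroclinic_uminus:
  assumes "layer_heteroclinic vb W Z a b"
  shows "layer_heteroclinic (- vb) (\<lambda>t. - W t) (\<lambda>t. - Z t) (- a) (- b)"
proof -
  have dW: "(W has_real_derivative Z t) (at t)"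
    and dZ: "(Z has_real_derivative (W t^3 - W t) / 2 - vb) (at t)" for t
    using assms unfolding layer_heteroclinic_def by auto
  show ?thesis
    unfolding layer_heteroclinic_def
  proof (intro conjI allI)
    fix t
    show "((\<lambda>t. - W t) has_real_derivative - Z t) (at t)"
      using DERIV_minus[OF dW] .
    show "((\<lambda>t. - Z t) has_real_derivative ((- W t)^3 - (- W t)) / 2 - (- vb)) (at t)"
      using DERIV_minus[OF dZ[of t]] by (rule DERIV_cong) (simp add: field_simps)
    show "((\<lambda>t. - Z t) \<longlongrightarrow> 0) at_bot" "((\<lambda>t. - Z t) \<longlongrightarrow> 0) at_top"
      using assms tendsto_minus[of Z 0] unfolding layer_heteroclinic_def by auto
  qed (use assms in \<open>auto simp: layer_heteroclinic_def intro: tendsto_minus\<close>)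
qed

lemma layer_heteroclinic_tanh:
  "layer_heteroclinic 0 (\<lambda>t. tanh (t/2)) (\<lambda>t. (1 - tanh (t/2)^2) / 2) (-1) 1"
proof -
  have top: "((\<lambda>t::real. tanh (t/2)) \<longlongrightarrow> 1) at_top"
    by (rule filterlim_compose[OF tanh_real_at_top]) real_asymp
  have bot: "((\<lambda>t::real. tanh (t/2)) \<longlongrightarrow> -1) at_bot"
    by (rule filterlim_compose[OF tanh_real_at_bot]) real_asymp
  have dW: "((\<lambda>t. tanh (t/2)) has_real_derivative (1 - tanh (t/2)^2) / 2) (at t)" for t :: real
    by (auto intro!: derivative_eq_intros)
  have dZ: "((\<lambda>t. (1 - tanh (t/2)^2) / 2) has_real_derivative (tanh (t/2)^3 - tanh (t/2)) / 2 - 0) (at t)"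
    for t :: real
    by (auto intro!: derivative_eq_intros simp: power2_eq_square power3_eq_cube field_simps)
  have "((\<lambda>t::real. (1 - tanh (t/2)^2) / 2) \<longlongrightarrow> (1 - 1^2) / 2) at_top"
    by (intro tendsto_divide tendsto_diff tendsto_const tendsto_power top) simp
  moreover have "((\<lambda>t::real. (1 - tanh (t/2)^2) / 2) \<longlongrightarrow> (1 - (-1)^2) / 2) at_bot"
    by (intro tendsto_divide tendsto_diff tendsto_const tendsto_power bot) simp
  ultimately show ?thesis
    using top bot dW dZ unfolding layer_heteroclinic_def by simp
qed

lemma H_separatrix: "H (ub, 0, x, (1 - x^2) / 2) = (4 * ub^2 - 1) / 8"
  unfolding H_def by (simp add: power2_eq_square power4_eq_xxxx field_simps)

section \<open>Necessity of the energy window\<close>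

(* (2 w^2 - 3 w^4) / 8 is H on C0 at u = 0; for w^2 > 1/3 it stays below its value 1/24
   at the folds w^2 = 1/3. *)
lemma slow_energy_below_fold:
  fixes w :: real
  assumes "w < - 1 / sqrt 3"
  shows "2*w^2 - 3*w^4 < 1/3"
proof -
  have "(1 / sqrt 3)^2 < (- w)^2"
    using assms by (intro power_strict_mono) auto
  then have "1 < 3 * w^2"
    by (simp add: power_divide)
  then have "0 < 3 * (w^2 - 1/3)^2"
    by simp
  then show ?thesis
    by (simp add: power2_eq_square power4_eq_xxxx algebra_simps)
qed

lemma left_slow_segment_energy_bounds:
  assumes traj: "reduced_traj u v w z T"
    and left: "\<And>t. t \<in> {0..T} \<Longrightarrow> (u t, v t, w t, z t) \<in> C0l"
    and level: "\<And>t. t \<in> {0..T} \<Longrightarrow> H (u t, v t, w t, z t) = \<mu>"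
    and ends: "w 0 = -1" "w T = -1"
  shows "-1/8 < \<mu> \<and> \<mu> < 1/24"
proof -
  have T: "T > 0"
    and du: "\<And>t. t \<in> {0..T} \<Longrightarrow> (u has_real_derivative w t) (at t within {0..T})"
    using traj unfolding reduced_traj_def by auto
  have w_left: "w t < - 1 / sqrt 3" if "t \<in> {0..T}" for t
    using left[OF that] unfolding C0l_def by auto
  have energy: "4*u t^2 - 3*w t^4 + 2*w t^2 = 8*\<mu>" if "t \<in> {0..T}" for t
    using H_on_C0[of "u t" "v t" "w t" "z t"] left[OF that] level[OF that]
    unfolding C0l_def by auto
  obtain \<xi> where \<xi>: "\<xi> \<in> {0..T}" "u T - u 0 = w \<xi> * (T - 0)"
    using mvt_very_simple[of 0 T u "\<lambda>t. (*) (w t)"] du T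
    unfolding has_field_derivative_def by auto
  have "0 < 1 / sqrt (3::real)"
    by simp
  with w_left[OF \<xi>(1)] have "w \<xi> < 0"
    by linarith
  with T have "w \<xi> * T < 0"
    by (simp add: mult_neg_pos)
  with \<xi>(2) have decreasing: "u T < u 0"
    by simp
  have "u 0^2 = u T^2"
    using energy[of 0] energy[of T] T ends by simp
  with decreasing have u_T: "u T = - u 0" and u_0: "u 0 > 0"
    by (auto simp: power2_eq_iff)
  have "4 * u 0^2 = 1 + 8*\<mu>"
    using energy[of 0] T ends by simp
  moreover have "0 < u 0^2"
    using u_0 by simp
  ultimately have lower: "-1/8 < \<mu>"
    by linarith
  have "continuous_on {0..T} u"
    by (rule DERIV_continuous_on[OF du])
  then obtain t0 where t0: "t0 \<in> {0..T}" "u t0 = 0"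
    using IVT2'[of u T 0 0] u_T u_0 T by auto
  have "8*\<mu> = 2*w t0^2 - 3*w t0^4"
    using energy[OF t0(1)] t0(2) by simp
  with slow_energy_below_fold[OF w_left[OF t0(1)]] have "\<mu> < 1/24"
    by simp
  with lower show ?thesis ..
qed

lemma sing_orbit_energy_bounds:
  assumes orbit: "sing_orbit_2slow_2fast \<gamma>" and level: "\<gamma> \<subseteq> {p. H p = \<mu>}"
  shows "-1/8 < \<mu> \<and> \<mu> < 1/24"
proof -
  obtain u1 v1 w1 z1 T1 u2 v2 w2 z2 T2 ub1 vb1 W1 Z1 a1 b1 ub2 vb2 W2 Z2 a2 b2 where
    r1: "reduced_traj u1 v1 w1 z1 T1" and l1: "\<forall>t\<in>{0..T1}. (u1 t, v1 t, w1 t, z1 t) \<in> C0l" and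
    r2: "reduced_traj u2 v2 w2 z2 T2" and l2: "\<forall>t\<in>{0..T2}. (u2 t, v2 t, w2 t, z2 t) \<in> C0r" and
    h1: "layer_heteroclinic vb1 W1 Z1 a1 b1" and
    h2: "layer_heteroclinic vb2 W2 Z2 a2 b2" and
    e1: "(u1 T1, v1 T1, w1 T1, z1 T1) = (ub1, vb1, a1, 0)" and
    e2: "(ub1, vb1, b1, 0) = (u2 0, v2 0, w2 0, z2 0)" and
    e3: "(u2 T2, v2 T2, w2 T2, z2 T2) = (ub2, vb2, a2, 0)" and
    e4: "(ub2, vb2, b2, 0) = (u1 0, v1 0, w1 0, z1 0)" and
    \<gamma>: "\<gamma> = (\<lambda>t. (u1 t, v1 t, w1 t, z1 t)) ` {0..T1}
          \<union> (\<lambda>t. (ub1, vb1, W1 t, Z1 t)) ` UNIV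
          \<union> (\<lambda>t. (u2 t, v2 t, w2 t, z2 t)) ` {0..T2}
          \<union> (\<lambda>t. (ub2, vb2, W2 t, Z2 t)) ` UNIV"
    using orbit unfolding sing_orbit_2slow_2fast_def by (elim exE conjE) (rule that; assumption)
  have T: "0 \<le> T1" "0 \<le> T2"
    using r1 r2 unfolding reduced_traj_def by auto
  have H1: "H (u1 t, v1 t, w1 t, z1 t) = \<mu>" if "t \<in> {0..T1}" for t
  proof -
    have "(u1 t, v1 t, w1 t, z1 t) \<in> \<gamma>"
      unfolding \<gamma> using that by (intro UnI1 imageI)
    with level show ?thesis by auto
  qed
  have H2: "H (u2 t, v2 t, w2 t, z2 t) = \<mu>" if "t \<in> {0..T2}" for t
  proof -
    have "(u2 t, v2 t, w2 t, z2 t) \<in> \<gamma>"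
      unfolding \<gamma> using that by (intro UnI1 UnI2 imageI)
    with level show ?thesis by auto
  qed
  have inv_sqrt3_pos: "0 < 1 / sqrt (3::real)"
    by simp
  have "H (ub1, vb1, a1, 0) = H (ub1, vb1, b1, 0)"
    using H1[of T1] H2[of 0] e1 e2 T by simp
  then have "a1^2 = 1"
    by (rule layer_heteroclinic_equal_energy(2)[OF h1])
  moreover have "a1 < - (1 / sqrt 3)"
    using l1 T e1 unfolding C0l_def by auto
  ultimately have w1_T: "w1 T1 = -1"
    using e1 inv_sqrt3_pos by (auto simp: power2_eq_1_iff)
  have "H (ub2, vb2, a2, 0) = H (ub2, vb2, b2, 0)"
    using H2[of T2] H1[of 0] e3 e4 T by simp
  then have "a2^2 = 1" and b2: "b2 = - a2"
    using layer_heteroclinic_equal_energy[OF h2] by blast+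
  moreover have "a2 > 1 / sqrt 3"
    using l2 T e3 unfolding C0r_def by auto
  ultimately have w1_0: "w1 0 = -1"
    using e4 inv_sqrt3_pos by (auto simp: power2_eq_1_iff)
  show ?thesis
    using left_slow_segment_energy_bounds[OF r1 _ H1 w1_0 w1_T] l1 by blast
qed

section \<open>Construction of the orbit\<close>

lemma has_real_derivative_inv_into:
  fixes \<tau> :: "real \<Rightarrow> real"
  assumes "open S" "x \<in> S" "continuous_on S \<tau>" "inj_on \<tau> S"
    and "(\<tau> has_real_derivative D) (at x)" "D \<noteq> 0"
  shows "(inv_into S \<tau> has_real_derivative inverse D) (at (\<tau> x))"
  unfolding has_field_derivative_def
proof (rule has_derivative_inverse_strong[of S x \<tau>])
  show "(\<tau> has_derivative (*) D) (at x)"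
    using assms(5) by (simp add: has_field_derivative_def)
  show "(*) D \<circ> (*) (inverse D) = id"
    using \<open>D \<noteq> 0\<close> by (auto simp: fun_eq_iff)
qed (use assms in auto)

lemma continuous_on_has_antiderivative:
  fixes g :: "real \<Rightarrow> real"
  assumes "continuous_on {a..b} g"
  obtains G where "\<And>x. x \<in> {a<..<b} \<Longrightarrow> (G has_real_derivative g x) (at x)"
proof
  fix x assume x: "x \<in> {a<..<b}"
  have "((\<lambda>x. integral {a..x} g) has_real_derivative g x) (at x within {a..b})"
    using assms x by (intro integral_has_real_derivative) auto
  moreover have "at x within {a..b} = at x"
    using x by (intro at_within_interior) auto
  ultimately show "((\<lambda>x. integral {a..x} g) has_real_derivative g x) (at x)"
    by simp
qed

lemma autonomous_ode_positive_solution: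
  fixes f :: "real \<Rightarrow> real"
  assumes cont: "continuous_on UNIV f" and pos: "\<And>y. 0 < f y" and "a < b"
  obtains y T where "0 < T" "y 0 = a" "y T = b"
    "\<And>t. t \<in> {0..T} \<Longrightarrow> (y has_real_derivative f (y t)) (at t)"
proof -
  define S where "S = {a - 1 <..< b + 1}"
  have "continuous_on UNIV (\<lambda>y. 1 / f y)"
    using cont pos by (intro continuous_intros) (auto simp: less_imp_neq[symmetric])
  then have "continuous_on {a - 1..b + 1} (\<lambda>y. 1 / f y)"
    by (rule continuous_on_subset) simp
  then obtain G where dG: "\<And>x. x \<in> S \<Longrightarrow> (G has_real_derivative 1 / f x) (at x)"
    unfolding S_def using continuous_on_has_antiderivative by blast
  define \<tau> where "\<tau> x = G x - G a" for x
  \<comment> \<open>the time needed to travel from a to x; the solution is the inverse of \<tau>\<close>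
  have d\<tau>: "(\<tau> has_real_derivative 1 / f x) (at x)" if "x \<in> S" for x
    unfolding \<tau>_def using dG[OF that] by (auto intro!: derivative_eq_intros)
  have cont\<tau>: "continuous_on S \<tau>"
  proof (rule continuous_at_imp_continuous_on, rule ballI)
    show "isCont \<tau> x" if "x \<in> S" for x
      using d\<tau>[OF that] by (rule DERIV_isCont)
  qed
  have mono: "strict_mono_on S \<tau>"
  proof (rule strict_mono_onI)
    fix x y assume "x \<in> S" "y \<in> S" "x < y"
    show "\<tau> x < \<tau> y"
    proof (rule DERIV_pos_imp_increasing[OF \<open>x < y\<close>])
      fix z assume "x \<le> z" "z \<le> y"
      with \<open>x \<in> S\<close> \<open>y \<in> S\<close> have "z \<in> S"
        by (auto simp: S_def)
      with d\<tau> pos show "\<exists>D. (\<tau> has_real_derivative D) (at z) \<and> 0 < D"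
        by (blast intro: divide_pos_pos zero_less_one)
    qed
  qed
  then have inj: "inj_on \<tau> S"
    by (rule strict_mono_on_imp_inj_on)
  have ab: "a \<in> S" "b \<in> S"
    using \<open>a < b\<close> by (auto simp: S_def)
  have \<tau>_a: "\<tau> a = 0"
    by (simp add: \<tau>_def)
  with mono ab \<open>a < b\<close> have T: "0 < \<tau> b"
    by (metis strict_mono_onD)
  define Y where "Y = inv_into S \<tau>"
  have Y\<tau>: "Y (\<tau> x) = x" if "x \<in> S" for x
    unfolding Y_def using inj that by (rule inv_into_f_f)
  show ?thesis
  proof (rule that[of "\<tau> b" Y])
    show "Y 0 = a" "Y (\<tau> b) = b"
      using Y\<tau>[of a] Y\<tau>[of b] ab \<tau>_a by simp_all
    fix t assume "t \<in> {0..\<tau> b}"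
    moreover have "continuous_on {a..b} \<tau>"
      using cont\<tau> by (rule continuous_on_subset) (auto simp: S_def)
    ultimately obtain x where x: "a \<le> x" "x \<le> b" "\<tau> x = t"
      using IVT'[of \<tau> a t b] \<tau>_a \<open>a < b\<close> by auto
    then have "x \<in> S"
      by (simp add: S_def)
    have "(Y has_real_derivative inverse (1 / f x)) (at (\<tau> x))"
      unfolding Y_def using cont\<tau> inj d\<tau>[OF \<open>x \<in> S\<close>] pos[of x] \<open>x \<in> S\<close>
      by (intro has_real_derivative_inv_into) (auto simp: S_def)
    with x show "(Y has_real_derivative f (Y t)) (at t)"
      using Y\<tau>[OF \<open>x \<in> S\<close>] by simp
  qed (fact T)
qed

(* With c = 1 - 24 \<mu>, the level set C0 \<inter> {H = \<mu>} is 4 u^2 - 3 w^4 + 2 w^2 = 8 \<mu>, i.e.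
   (3 w^2 - 1)^2 = c + 12 u^2; slow_w c u is its branch in C0l, as a graph over u. *)
definition slow_w :: "real \<Rightarrow> real \<Rightarrow> real" where
  "slow_w c u = - sqrt ((1 + sqrt (c + 12 * u^2)) / 3)"

lemma slow_w_even: "slow_w c (- u) = slow_w c u"
  by (simp add: slow_w_def)

lemma slow_w_sq:
  assumes "0 \<le> c"
  shows "3 * slow_w c u^2 - 1 = sqrt (c + 12 * u^2)"
  using assms by (simp add: slow_w_def field_simps)

lemma slow_w_less:
  assumes "0 < c"
  shows "slow_w c u < - 1 / sqrt 3"
proof -
  have "0 < sqrt (c + 12 * u^2)"
    using assms by (simp add: add_pos_nonneg)
  then have "sqrt (1 / 3) < sqrt ((1 + sqrt (c + 12 * u^2)) / 3)"
    by simp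
  then show ?thesis
    by (simp add: slow_w_def real_sqrt_divide)
qed

lemma slow_w_neg:
  assumes "0 < c"
  shows "slow_w c u < 0"
proof -
  have "0 < 1 / sqrt (3::real)"
    by simp
  with slow_w_less[OF assms, of u] show ?thesis
    by linarith
qed

lemma slow_w_energy:
  assumes "0 \<le> c"
  shows "4 * u^2 - 3 * slow_w c u^4 + 2 * slow_w c u^2 = (1 - c) / 3"
proof -
  have "(3 * slow_w c u^2 - 1)^2 = c + 12 * u^2"
    using assms by (simp add: slow_w_sq)
  then show ?thesis
    by (simp add: power2_eq_square power4_eq_xxxx algebra_simps)
qed

lemma continuous_on_slow_w: "continuous_on A (slow_w c)"
  unfolding slow_w_def[abs_def] by (intro continuous_intros) simp

lemma slow_w_has_derivative:
  assumes "0 < c"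
  shows "(slow_w c has_real_derivative 2 * u / (sqrt (c + 12 * u^2) * slow_w c u)) (at u)"
proof -
  have R: "0 < c + 12 * u^2"
    using assms by (simp add: add_pos_nonneg)
  then have Q: "0 < (1 + sqrt (c + 12 * u^2)) / 3"
    by (simp add: add_pos_pos)
  have "((\<lambda>u. c + 12 * u^2) has_real_derivative 24 * u) (at u)"
    by (auto intro!: derivative_eq_intros)
  from DERIV_chain2[OF DERIV_real_sqrt[OF R] this]
  have "((\<lambda>u. (1 + sqrt (c + 12 * u^2)) / 3) has_real_derivative 4 * u / sqrt (c + 12 * u^2)) (at u)"
    using R by (auto intro!: derivative_eq_intros simp: field_simps)
  from DERIV_minus[OF DERIV_chain2[OF DERIV_real_sqrt[OF Q] this]]
  show ?thesis
    using R Q unfolding slow_w_def[abs_def] by (simp add: field_simps)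
qed

lemma slow_v_has_derivative:
  assumes "0 < c"
  shows "((\<lambda>u. (slow_w c u^3 - slow_w c u) / 2) has_real_derivative u / slow_w c u) (at u)"
proof -
  have r: "0 < sqrt (c + 12 * u^2)"
    using assms by (simp add: add_pos_nonneg)
  have "((\<lambda>u. (slow_w c u^3 - slow_w c u) / 2) has_real_derivative
      (3 * slow_w c u^2 - 1) / 2 * (2 * u / (sqrt (c + 12 * u^2) * slow_w c u))) (at u)"
  proof (rule DERIV_chain2[OF _ slow_w_has_derivative[OF assms]])
    show "((\<lambda>x. (x^3 - x) / 2) has_real_derivative (3 * slow_w c u^2 - 1) / 2) (at (slow_w c u))"
      by (auto intro!: derivative_eq_intros)
  qed
  moreover have "(3 * slow_w c u^2 - 1) / 2 * (2 * u / (sqrt (c + 12 * u^2) * slow_w c u)) = u / slow_w c u"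
    using r assms by (simp add: slow_w_sq)
  ultimately show ?thesis
    by simp
qed

lemma left_slow_segment_exists:
  assumes "-1/8 < \<mu>" "\<mu> < 1/24"
  obtains u w :: "real \<Rightarrow> real" and T :: real
  where "reduced_traj u (\<lambda>t. (w t^3 - w t) / 2) w (\<lambda>_. 0) T"
    "\<And>t. t \<in> {0..T} \<Longrightarrow> (u t, (w t^3 - w t) / 2, w t, 0) \<in> C0l"
    "\<And>t. t \<in> {0..T} \<Longrightarrow> H (u t, (w t^3 - w t) / 2, w t, 0) = \<mu>"
    "u 0 = sqrt (1 + 8*\<mu>) / 2" "u T = - (sqrt (1 + 8*\<mu>) / 2)" "w 0 = -1" "w T = -1"
proof -
  define c where "c = 1 - 24*\<mu>"
  define s where "s = sqrt (1 + 8*\<mu>) / 2"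
  have c: "0 < c"
    using assms by (simp add: c_def)
  have s: "0 < s"
    using assms by (simp add: s_def)
  have "4 * s^2 = 1 + 8*\<mu>"
    using assms by (simp add: s_def power_divide)
  then have "c + 12 * s^2 = 4"
    by (simp add: c_def)
  then have w_s: "slow_w c s = -1"
    by (simp add: slow_w_def)
  obtain y T where T: "0 < T" and y: "y 0 = - s" "y T = s"
    and dy: "\<And>t. t \<in> {0..T} \<Longrightarrow> (y has_real_derivative - slow_w c (y t)) (at t)"
  proof (rule autonomous_ode_positive_solution[of "\<lambda>x. - slow_w c x" "- s" s])
    show "continuous_on UNIV (\<lambda>x. - slow_w c x)"
      by (intro continuous_intros continuous_on_slow_w)
  qed (use slow_w_neg[OF c] s in auto)
  define u where "u t = - y t" for t
  \<comment> \<open>as slow_w c is even, u solves u' = slow_w c u\<close>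
  define w where "w t = slow_w c (u t)" for t
  have du: "(u has_real_derivative w t) (at t)" if "t \<in> {0..T}" for t
    using DERIV_minus[OF dy[OF that]] by (simp add: u_def[abs_def] w_def slow_w_even)
  have dv: "((\<lambda>t. (w t^3 - w t) / 2) has_real_derivative u t) (at t)" if "t \<in> {0..T}" for t
    using DERIV_chain2[OF slow_v_has_derivative[OF c] du[OF that]] slow_w_neg[OF c, of "u t"]
    by (simp add: w_def[abs_def])
  show ?thesis
  proof (rule that[of u w T])
    show "reduced_traj u (\<lambda>t. (w t^3 - w t) / 2) w (\<lambda>_. 0) T"
      unfolding reduced_traj_def C0_def
      using T du dv by (auto intro: has_field_derivative_at_within)
    show "(u t, (w t^3 - w t) / 2, w t, 0) \<in> C0l" for t
      using slow_w_less[OF c] by (simp add: C0l_def C0_def w_def)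
    show "H (u t, (w t^3 - w t) / 2, w t, 0) = \<mu>" for t
      using H_on_C0[of "u t" "(w t^3 - w t) / 2" "w t" 0] slow_w_energy[of c "u t"] c
      by (simp add: C0_def w_def c_def)
    show "u 0 = sqrt (1 + 8*\<mu>) / 2" "u T = - (sqrt (1 + 8*\<mu>) / 2)"
      using y by (simp_all add: u_def s_def)
    show "w 0 = -1" "w T = -1"
      using y w_s by (simp_all add: u_def w_def slow_w_even)
  qed
qed

lemma sing_orbit_exists:
  assumes "-1/8 < \<mu>" "\<mu> < 1/24"
  shows "\<exists>\<gamma>. sing_orbit_2slow_2fast \<gamma> \<and> \<gamma> \<subseteq> {p. H p = \<mu>}"
proof -
  define s where "s = sqrt (1 + 8*\<mu>) / 2"
  obtain u w T where traj: "reduced_traj u (\<lambda>t. (w t^3 - w t) / 2) w (\<lambda>_. 0) T"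
    and left: "\<And>t. t \<in> {0..T} \<Longrightarrow> (u t, (w t^3 - w t) / 2, w t, 0) \<in> C0l"
    and level: "\<And>t. t \<in> {0..T} \<Longrightarrow> H (u t, (w t^3 - w t) / 2, w t, 0) = \<mu>"
    and ends: "u 0 = s" "u T = - s" "w 0 = -1" "w T = -1"
    using left_slow_segment_exists[OF assms, folded s_def] by blast
  define v where "v t = (w t^3 - w t) / 2" for t
  define W where "W t = tanh (t/2)" for t :: real
  define Z where "Z t = (1 - W t^2) / 2" for t
  define \<gamma> where "\<gamma> = (\<lambda>t. (u t, v t, w t, 0)) ` {0..T}
    \<union> (\<lambda>t. (- s, 0, W t, Z t)) ` UNIV
    \<union> (\<lambda>t. (- u t, - v t, - w t, 0)) ` {0..T}
    \<union> (\<lambda>t. (s, 0, - W t, - Z t)) ` UNIV"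
  have fast: "layer_heteroclinic 0 W Z (-1) 1"
    using layer_heteroclinic_tanh by (simp add: W_def[abs_def] Z_def[abs_def])
  have ends_v: "v 0 = 0" "v T = 0"
    using ends by (simp_all add: v_def)
  have "sing_orbit_2slow_2fast \<gamma>"
    unfolding sing_orbit_2slow_2fast_def
  proof (intro exI conjI)
    show "reduced_traj u v w (\<lambda>_. 0) T"
      using traj by (simp add: v_def[abs_def])
    show "\<forall>t\<in>{0..T}. (u t, v t, w t, 0) \<in> C0l"
      using left by (simp add: v_def)
    show "reduced_traj (\<lambda>t. - u t) (\<lambda>t. - v t) (\<lambda>t. - w t) (\<lambda>_. 0) T"
      using reduced_traj_uminus[OF traj] by (simp add: v_def[abs_def])
    show "\<forall>t\<in>{0..T}. (- u t, - v t, - w t, 0) \<in> C0r"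
      using left C0r_iff_uminus_C0l[of "u t" "v t" "w t" 0 for t] by (simp add: v_def)
    show "layer_heteroclinic 0 W Z (-1) 1"
      by (fact fast)
    show "layer_heteroclinic 0 (\<lambda>t. - W t) (\<lambda>t. - Z t) 1 (- 1)"
      using layer_heteroclinic_uminus[OF fast] by simp
  qed (use ends ends_v in \<open>simp_all add: \<gamma>_def\<close>)
  moreover have "\<gamma> \<subseteq> {p. H p = \<mu>}"
  proof -
    have "4 * s^2 = 1 + 8*\<mu>"
      using assms by (simp add: s_def power_divide)
    then have fast1: "H (- s, 0, W t, Z t) = \<mu>" for t
      using H_separatrix[of "- s" "W t"] by (simp add: Z_def)
    have fast2: "H (s, 0, - W t, - Z t) = \<mu>" for t
      using H_uminus[of "- s" 0 "W t" "Z t"] fast1[of t] by simp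
    have slow1: "H (u t, v t, w t, 0) = \<mu>" if "t \<in> {0..T}" for t
      using level[OF that] by (simp add: v_def)
    have slow2: "H (- u t, - v t, - w t, 0) = \<mu>" if "t \<in> {0..T}" for t
      using H_uminus[of "u t" "v t" "w t" 0] slow1[OF that] by simp
    show ?thesis
      using fast1 fast2 slow1 slow2 unfolding \<gamma>_def by auto
  qed
  ultimately show ?thesis
    by blast
qed

theorem proposition1:
  fixes \<mu> :: real
  shows "(\<exists>\<gamma>. sing_orbit_2slow_2fast \<gamma> \<and> \<gamma> \<subseteq> {p. H p = \<mu>})
         \<longleftrightarrow> \<mu> \<in> {-1/8 <..< 1/24}"
  using sing_orbit_energy_bounds sing_orbit_exists by auto

end
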